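(* For every graph $G$ and every integer $\ell\ge 0$, a set $B\subseteq V(G)$ is an $\ell$-leaky forcing set of $G$ if and only if it is an $\ell$-edge-leaky forcing set of $G$. In particular $\operatorname{Z}_{(\ell)}(G)=\operatorname{Z}'_{(\ell)}(G)$.
   Context: All graphs are finite, simple and undirected. Zero forcing: a blue vertex $u$ with exactly one white neighbor $w$ may force $w$ (color it blue), written $u\to w$. A vertex leak is a vertex not allowed to perform any force; $B$ is an $\ell$-leaky forcing set if for every set of at most $\ell$ vertex leaks, exhaustively applying the forcing rule from initial blue set $B$ (leaks never forcing) colors all of $V(G)$ blue. An edge leak is an edge $xy$ across which no force may be performed (neither $x\to y$ nor $y\to x$); $B$ is an $\ell$-edge-leaky forcing set if for every set of at most $\ell$ edge leaks, $B$ colors all of $V(G)$ blue without forcing across leak edges. $\operatorname{Z}_{(\ell)}(G)$ and $\operatorname{Z}'_{(\ell)}(G)$ are the minimum sizes of an $\ell$-leaky forcing set and of an $\ell$-edge-leaky forcing set, respectively. *)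

theory Defs
  imports Main
begin

definition graph :: "'a set \<Rightarrow> ('a \<Rightarrow> 'a \<Rightarrow> bool) \<Rightarrow> bool" where
  "graph V E \<longleftrightarrow> finite V \<and> (\<forall>x y. E x y \<longrightarrow> x \<in> V \<and> y \<in> V)
     \<and> (\<forall>x y. E x y \<longrightarrow> E y x) \<and> (\<forall>x. \<not> E x x)"

definition edges :: "'a set \<Rightarrow> ('a \<Rightarrow> 'a \<Rightarrow> bool) \<Rightarrow> 'a set set" where
  "edges V E = {{x, y} | x y. x \<in> V \<and> y \<in> V \<and> E x y}"

text \<open>A force u \<rightarrow> w is possible when u is blue, w is a neighbour
of u and every other neighbour of u is already blue (so w is the unique white
neighbour, or already blue). The final colouring of the exhaustive process is
the least set closed under these forces.\<close>
inductive_set force_closure ::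
  "('a \<Rightarrow> 'a \<Rightarrow> bool) \<Rightarrow> ('a \<Rightarrow> 'a \<Rightarrow> bool) \<Rightarrow> 'a set \<Rightarrow> 'a set"
  for E :: "'a \<Rightarrow> 'a \<Rightarrow> bool" and ok :: "'a \<Rightarrow> 'a \<Rightarrow> bool" and B :: "'a set" where
  init: "b \<in> B \<Longrightarrow> b \<in> force_closure E ok B"
| force: "\<lbrakk>u \<in> force_closure E ok B; E u w; ok u w;
           \<forall>x. E u x \<and> x \<noteq> w \<longrightarrow> x \<in> force_closure E ok B\<rbrakk>
          \<Longrightarrow> w \<in> force_closure E ok B"

definition vleak_closure :: "('a \<Rightarrow> 'a \<Rightarrow> bool) \<Rightarrow> 'a set \<Rightarrow> 'a set \<Rightarrow> 'a set" where
  "vleak_closure E L B = force_closure E (\<lambda>u w. u \<notin> L) B"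

definition eleak_closure :: "('a \<Rightarrow> 'a \<Rightarrow> bool) \<Rightarrow> 'a set set \<Rightarrow> 'a set \<Rightarrow> 'a set" where
  "eleak_closure E F B = force_closure E (\<lambda>u w. {u, w} \<notin> F) B"

definition leaky_forcing_set ::
  "'a set \<Rightarrow> ('a \<Rightarrow> 'a \<Rightarrow> bool) \<Rightarrow> nat \<Rightarrow> 'a set \<Rightarrow> bool" where
  "leaky_forcing_set V E l B \<longleftrightarrow> B \<subseteq> V \<and>
     (\<forall>L. L \<subseteq> V \<and> card L \<le> l \<longrightarrow> vleak_closure E L B = V)"

definition edge_leaky_forcing_set ::
  "'a set \<Rightarrow> ('a \<Rightarrow> 'a \<Rightarrow> bool) \<Rightarrow> nat \<Rightarrow> 'a set \<Rightarrow> bool" where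
  "edge_leaky_forcing_set V E l B \<longleftrightarrow> B \<subseteq> V \<and>
     (\<forall>F. F \<subseteq> edges V E \<and> card F \<le> l \<longrightarrow> eleak_closure E F B = V)"

definition Z_leaky :: "'a set \<Rightarrow> ('a \<Rightarrow> 'a \<Rightarrow> bool) \<Rightarrow> nat \<Rightarrow> nat" where
  "Z_leaky V E l = (LEAST k. \<exists>B. leaky_forcing_set V E l B \<and> card B = k)"

definition Z_edge_leaky :: "'a set \<Rightarrow> ('a \<Rightarrow> 'a \<Rightarrow> bool) \<Rightarrow> nat \<Rightarrow> nat" where
  "Z_edge_leaky V E l = (LEAST k. \<exists>B. edge_leaky_forcing_set V E l B \<and> card B = k)"

end

theory Submission
  imports Defs
begin

text \<open>Let C be the final colouring for one kind of leak. Every force still available from C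
  is blocked by a leak, and from a white vertex each such force is determined by its forcing
  vertex u (all other neighbours of u are blue). Replacing the blocking leaks by the forcing
  vertices, resp. the edges of the blocked forces, gives at most as many leaks of the other
  kind under which the colouring stalls at C again; hence C = V in one setting iff in the
  other.\<close>

definition available_force :: "('a \<Rightarrow> 'a \<Rightarrow> bool) \<Rightarrow> 'a set \<Rightarrow> 'a \<Rightarrow> 'a \<Rightarrow> bool" where
  "available_force E C u w \<longleftrightarrow>
     u \<in> C \<and> w \<notin> C \<and> E u w \<and> (\<forall>x. E u x \<and> x \<noteq> w \<longrightarrow> x \<in> C)"

lemma available_force_unique:
  "available_force E C u w \<Longrightarrow> available_force E C u w' \<Longrightarrow> w = w'"
  unfolding available_force_def by blast

lemma force_closure_least:
  assumes "B \<subseteq> S"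
    and "\<And>u w. u \<in> S \<Longrightarrow> E u w \<Longrightarrow> ok u w \<Longrightarrow> \<forall>x. E u x \<and> x \<noteq> w \<longrightarrow> x \<in> S \<Longrightarrow> w \<in> S"
  shows "force_closure E ok B \<subseteq> S"
proof
  fix x assume "x \<in> force_closure E ok B"
  then show "x \<in> S"
    by (induction rule: force_closure.induct) (use assms in blast)+
qed

lemma force_closure_subset_vertices:
  assumes "graph V E" "B \<subseteq> V"
  shows "force_closure E ok B \<subseteq> V"
  using assms by (intro force_closure_least) (auto simp: graph_def)

lemma force_closure_subset_if_available_forces_disallowed:
  assumes "\<And>u w. available_force E (force_closure E ok B) u w \<Longrightarrow> ok' u w \<Longrightarrow> ok u w"
  shows "force_closure E ok' B \<subseteq> force_closure E ok B"
proof (rule force_closure_least)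
  show "B \<subseteq> force_closure E ok B"
    by (auto intro: force_closure.init)
next
  fix u w
  assume u: "u \<in> force_closure E ok B" and uw: "E u w" "ok' u w"
    and others: "\<forall>x. E u x \<and> x \<noteq> w \<longrightarrow> x \<in> force_closure E ok B"
  show "w \<in> force_closure E ok B"
  proof (cases "w \<in> force_closure E ok B")
    case False
    then have "available_force E (force_closure E ok B) u w"
      using u uw others by (simp add: available_force_def)
    then have "ok u w" using assms uw by blast
    then show ?thesis using u uw others by (blast intro: force_closure.force)
  qed
qed

lemma finite_edges: "finite V \<Longrightarrow> finite (edges V E)"
  by (rule finite_subset[of _ "Pow V"]) (auto simp: edges_def)

lemma edges_of_available_force:
  assumes "graph V E" "available_force E C u w"
  shows "{u, w} \<in> edges V E"
  using assms unfolding graph_def edges_def available_force_def by blast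

text \<open>An edge of an available force has exactly one endpoint in C, namely the forcing vertex.\<close>
lemma card_available_force_tails_le:
  assumes "finite F"
  shows "card {u. \<exists>w. available_force E C u w \<and> {u, w} \<in> F} \<le> card F"
proof -
  define tail where "tail e = (SOME u. u \<in> e \<and> u \<in> C)" for e :: "'a set"
  have "{u. \<exists>w. available_force E C u w \<and> {u, w} \<in> F} \<subseteq> tail ` F"
  proof
    fix u assume "u \<in> {u. \<exists>w. available_force E C u w \<and> {u, w} \<in> F}"
    then obtain w where w: "available_force E C u w" "{u, w} \<in> F" by blast
    then have "u \<in> {u, w} \<and> u \<in> C" by (simp add: available_force_def)
    then have "tail {u, w} \<in> {u, w} \<and> tail {u, w} \<in> C"
      unfolding tail_def by (rule someI[where P = "\<lambda>x. x \<in> {u, w} \<and> x \<in> C"])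
    then have "tail {u, w} = u" using w(1) by (auto simp: available_force_def)
    then show "u \<in> tail ` F" using w(2) by force
  qed
  then have "card {u. \<exists>w. available_force E C u w \<and> {u, w} \<in> F} \<le> card (tail ` F)"
    using assms by (intro card_mono) auto
  also have "\<dots> \<le> card F" using assms by (rule card_image_le)
  finally show ?thesis .
qed

lemma card_available_force_edges_le:
  assumes "finite L"
  shows "card {{u, w} | u w. available_force E C u w \<and> u \<in> L} \<le> card L"
proof -
  define edge where "edge u = {u, THE w. available_force E C u w}" for u
  have "{{u, w} | u w. available_force E C u w \<and> u \<in> L} \<subseteq> edge ` L"
  proof
    fix e assume "e \<in> {{u, w} | u w. available_force E C u w \<and> u \<in> L}"
    then obtain u w where uw: "available_force E C u w" "u \<in> L" "e = {u, w}" by blast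
    have "(THE w. available_force E C u w) = w"
      using uw(1) by (rule the_equality) (rule available_force_unique[OF _ uw(1)])
    then have "e = edge u" using uw(3) by (simp add: edge_def)
    then show "e \<in> edge ` L" using uw(2) by simp
  qed
  then have "card {{u, w} | u w. available_force E C u w \<and> u \<in> L} \<le> card (edge ` L)"
    using assms by (intro card_mono) auto
  also have "\<dots> \<le> card L" using assms by (rule card_image_le)
  finally show ?thesis .
qed

lemma leaky_forcing_set_imp_edge_leaky:
  assumes G: "graph V E" and leaky: "leaky_forcing_set V E l B"
  shows "edge_leaky_forcing_set V E l B"
  unfolding edge_leaky_forcing_set_def
proof (intro conjI allI impI)
  show BV: "B \<subseteq> V" using leaky by (simp add: leaky_forcing_set_def)
  fix F assume F: "F \<subseteq> edges V E \<and> card F \<le> l"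
  define C where "C = eleak_closure E F B"
  define L where "L = {u. \<exists>w. available_force E C u w \<and> {u, w} \<in> F}"
  have CV: "C \<subseteq> V"
    unfolding C_def eleak_closure_def using force_closure_subset_vertices[OF G BV] .
  have "finite F"
    using F G finite_edges finite_subset unfolding graph_def by blast
  then have "card L \<le> l"
    using F card_available_force_tails_le[of F E C] unfolding L_def by linarith
  moreover have "L \<subseteq> V" using CV by (auto simp: L_def available_force_def)
  ultimately have "vleak_closure E L B = V"
    using leaky by (simp add: leaky_forcing_set_def)
  moreover have "vleak_closure E L B \<subseteq> C"
    unfolding vleak_closure_def C_def eleak_closure_def
  proof (rule force_closure_subset_if_available_forces_disallowed)
    fix u w assume "available_force E (force_closure E (\<lambda>u w. {u, w} \<notin> F) B) u w"
      and "u \<notin> L"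
    then show "{u, w} \<notin> F" unfolding L_def C_def eleak_closure_def by blast
  qed
  ultimately show "eleak_closure E F B = V" using CV C_def by blast
qed

lemma edge_leaky_forcing_set_imp_leaky:
  assumes G: "graph V E" and edge_leaky: "edge_leaky_forcing_set V E l B"
  shows "leaky_forcing_set V E l B"
  unfolding leaky_forcing_set_def
proof (intro conjI allI impI)
  show BV: "B \<subseteq> V" using edge_leaky by (simp add: edge_leaky_forcing_set_def)
  fix L assume L: "L \<subseteq> V \<and> card L \<le> l"
  define C where "C = vleak_closure E L B"
  define F where "F = {{u, w} | u w. available_force E C u w \<and> u \<in> L}"
  have CV: "C \<subseteq> V"
    unfolding C_def vleak_closure_def using force_closure_subset_vertices[OF G BV] .
  have "finite L" using L G finite_subset unfolding graph_def by blast
  then have "card F \<le> l"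
    using L card_available_force_edges_le[of L E C] unfolding F_def by linarith
  moreover have "F \<subseteq> edges V E"
    using edges_of_available_force[OF G] by (auto simp: F_def)
  ultimately have "eleak_closure E F B = V"
    using edge_leaky by (simp add: edge_leaky_forcing_set_def)
  moreover have "eleak_closure E F B \<subseteq> C"
    unfolding eleak_closure_def C_def vleak_closure_def
  proof (rule force_closure_subset_if_available_forces_disallowed)
    fix u w assume "available_force E (force_closure E (\<lambda>u w. u \<notin> L) B) u w"
      and "{u, w} \<notin> F"
    then show "u \<notin> L"
      unfolding F_def C_def vleak_closure_def by blast
  qed
  ultimately show "vleak_closure E L B = V" using CV C_def by blast
qed

lemma leaky_forcing_set_iff_edge_leaky:
  "graph V E \<Longrightarrow> leaky_forcing_set V E l B \<longleftrightarrow> edge_leaky_forcing_set V E l B"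
  using leaky_forcing_set_imp_edge_leaky edge_leaky_forcing_set_imp_leaky by blast

theorem corollary2p4:
  fixes V :: "'a set" and E :: "'a \<Rightarrow> 'a \<Rightarrow> bool" and l :: nat
  assumes "graph V E"
  shows "(\<forall>B. B \<subseteq> V \<longrightarrow>
            (leaky_forcing_set V E l B \<longleftrightarrow> edge_leaky_forcing_set V E l B))
         \<and> Z_leaky V E l = Z_edge_leaky V E l"
  using leaky_forcing_set_iff_edge_leaky[OF assms]
  by (simp add: Z_leaky_def Z_edge_leaky_def)

end
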